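(* Let $m\ge1$ be an integer, $r=2m+1$, $\varepsilon>0$ real, $p$ a positive integer, and $\mathcal C_0^r,\dots,\mathcal C_{r-1}^r>0$. Let $f_j=f(x_j)$ be values of a function on a uniform grid $x_j=x_0+j\Delta x$, fix an index $i$, and let $\hat f_{i+1/2}=\sum_{k=0}^{r-1}\omega_k\,g(f_{i+k-r+1},\dots,f_{i+k})$ be the WENO reconstruction defined in the context. Then $$\hat f_{i+1/2}=\frac{\mathbf p_1(\mathbf f)}{\mathbf p_2(\mathbf f)},\qquad \mathbf f=(f_{i-r+1},\dots,f_{i+r-1}),$$ where $\mathbf p_1,\mathbf p_2$ are multivariate polynomials in $\mathbf f$ of degree at most $2pr-1$ and $2p(r-1)$ respectively, with $\mathbf p_2(\mathbf f)>0$ for all real $\mathbf f$.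
   Context: For $k=0,\dots,r-1$, the candidate stencil $S^k$ consists of the grid points $x_{i+k-r+1},\dots,x_{i+k}$; $\mathbf p_k$ is the polynomial of degree at most $r-1$ interpolating $f$ there. The linear map $g$ is $g(f_{i+k-r+1},\dots,f_{i+k})=\sum_{l=0}^{r-1}c^r_{k,l}f_{i+k-r+1+l}=\mathbf p_k(x_{i+1/2})$, with constants $c^r_{k,l}$ depending only on $r,k,l$, where $x_{i\pm1/2}=x_i\pm\Delta x/2$. The smoothness indicator is $\mathbf{IS}_k=\sum_{l=1}^{r-1}(\Delta x)^{2l-1}\int_{x_{i-1/2}}^{x_{i+1/2}}\big(\mathbf p_k^{(l)}(x)\big)^2dx$, and the WENO weights are $\omega_k=\alpha_k/(\alpha_0+\dots+\alpha_{r-1})$, $\alpha_k=\mathcal C_k^r/(\varepsilon+\mathbf{IS}_k)^p$. *)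

theory Defs
  imports "HOL-Analysis.Analysis" "HOL-Computational_Algebra.Polynomial"
begin

definition mpoly_fun :: "nat \<Rightarrow> nat \<Rightarrow> ((nat \<Rightarrow> real) \<Rightarrow> real) \<Rightarrow> bool" where
  "mpoly_fun n d P \<longleftrightarrow>
     (\<exists>(A :: (nat \<Rightarrow> nat) set) (c :: (nat \<Rightarrow> nat) \<Rightarrow> real).
        finite A \<and>
        (\<forall>a\<in>A. (\<forall>j\<ge>n. a j = 0) \<and> (\<Sum>j<n. a j) \<le> d) \<and>
        (\<forall>v. P v = (\<Sum>a\<in>A. c a * (\<Prod>j<n. v j ^ a j))))"

definition grid :: "real \<Rightarrow> real \<Rightarrow> int \<Rightarrow> real" where
  "grid x0 dx j = x0 + of_int j * dx"

definition weno_pk :: "nat \<Rightarrow> real \<Rightarrow> real \<Rightarrow> (real \<Rightarrow> real) \<Rightarrow> int \<Rightarrow> nat \<Rightarrow> real poly" where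
  "weno_pk r x0 dx f i k =
     (THE q. degree q \<le> r - 1 \<and>
        (\<forall>l<r. poly q (grid x0 dx (i + int k - int r + 1 + int l))
               = f (grid x0 dx (i + int k - int r + 1 + int l))))"

definition weno_g :: "nat \<Rightarrow> real \<Rightarrow> real \<Rightarrow> (real \<Rightarrow> real) \<Rightarrow> int \<Rightarrow> nat \<Rightarrow> real" where
  "weno_g r x0 dx f i k = poly (weno_pk r x0 dx f i k) (grid x0 dx i + dx / 2)"

definition weno_IS :: "nat \<Rightarrow> real \<Rightarrow> real \<Rightarrow> (real \<Rightarrow> real) \<Rightarrow> int \<Rightarrow> nat \<Rightarrow> real" where
  "weno_IS r x0 dx f i k =
     (\<Sum>l\<in>{1..r - 1}. dx ^ (2 * l - 1) *
        integral {grid x0 dx i - dx / 2 .. grid x0 dx i + dx / 2}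
          (\<lambda>t. (poly ((pderiv ^^ l) (weno_pk r x0 dx f i k)) t) ^ 2))"

definition weno_alpha :: "nat \<Rightarrow> real \<Rightarrow> nat \<Rightarrow> (nat \<Rightarrow> real) \<Rightarrow> real \<Rightarrow> real \<Rightarrow> (real \<Rightarrow> real) \<Rightarrow> int \<Rightarrow> nat \<Rightarrow> real" where
  "weno_alpha r eps p C x0 dx f i k = C k / (eps + weno_IS r x0 dx f i k) ^ p"

definition weno_omega :: "nat \<Rightarrow> real \<Rightarrow> nat \<Rightarrow> (nat \<Rightarrow> real) \<Rightarrow> real \<Rightarrow> real \<Rightarrow> (real \<Rightarrow> real) \<Rightarrow> int \<Rightarrow> nat \<Rightarrow> real" where
  "weno_omega r eps p C x0 dx f i k =
     weno_alpha r eps p C x0 dx f i k / (\<Sum>j<r. weno_alpha r eps p C x0 dx f i j)"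

definition weno_rec :: "nat \<Rightarrow> real \<Rightarrow> nat \<Rightarrow> (nat \<Rightarrow> real) \<Rightarrow> real \<Rightarrow> real \<Rightarrow> (real \<Rightarrow> real) \<Rightarrow> int \<Rightarrow> real" where
  "weno_rec r eps p C x0 dx f i =
     (\<Sum>k<r. weno_omega r eps p C x0 dx f i k * weno_g r x0 dx f i k)"

end

theory Submission
  imports Defs
begin

text \<open>Each candidate interpolant \<open>p\<^sub>k\<close> depends linearly on the stencil values (Lagrange form), so
  \<open>g\<close> is a linear form and \<open>IS\<^sub>k\<close> a nonnegative quadratic form in \<open>f\<close>. Multiplying the numerator
  and denominator of the normalised weights by \<open>\<Prod>\<^sub>j (\<epsilon> + IS\<^sub>j)\<^sup>p\<close> clears all denominators and
  leaves polynomials of degree \<open>1 + 2p(r-1) \<le> 2pr - 1\<close> and \<open>2p(r-1)\<close>; the denominator is positive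
  because every \<open>C\<^sub>k\<close> and every \<open>\<epsilon> + IS\<^sub>j\<close> is.\<close>

text \<open>Monomials may be indexed by an arbitrary finite set, with repeated exponent vectors;
  the introduction rule merges the repetitions.\<close>

lemma mpoly_funI:
  fixes X :: "'x set" and e :: "'x \<Rightarrow> nat \<Rightarrow> nat" and c :: "'x \<Rightarrow> real"
  assumes fin: "finite X"
    and deg: "\<And>x. x \<in> X \<Longrightarrow> (\<forall>j\<ge>n. e x j = 0) \<and> (\<Sum>j<n. e x j) \<le> d"
    and eq: "\<And>v. P v = (\<Sum>x\<in>X. c x * (\<Prod>j<n. v j ^ e x j))"
  shows "mpoly_fun n d P"
  unfolding mpoly_fun_def
proof (intro exI conjI allI)
  show "finite (e ` X)" using fin by simp
  show "\<forall>a\<in>e ` X. (\<forall>j\<ge>n. a j = 0) \<and> (\<Sum>j<n. a j) \<le> d" using deg by auto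
  fix v
  have "P v = (\<Sum>a\<in>e ` X. \<Sum>x\<in>{x\<in>X. e x = a}. c x * (\<Prod>j<n. v j ^ e x j))"
    unfolding eq using fin by (rule sum.image_gen)
  also have "\<dots> = (\<Sum>a\<in>e ` X. (\<Sum>x\<in>{x\<in>X. e x = a}. c x) * (\<Prod>j<n. v j ^ a j))"
    by (simp add: sum_distrib_right)
  finally show "P v = (\<Sum>a\<in>e ` X. (\<Sum>x\<in>{x\<in>X. e x = a}. c x) * (\<Prod>j<n. v j ^ a j))" .
qed

lemma mpoly_fun_mono: "mpoly_fun n d P \<Longrightarrow> d \<le> d' \<Longrightarrow> mpoly_fun n d' P"
  unfolding mpoly_fun_def by (meson order_trans)

lemma mpoly_fun_const: "mpoly_fun n d (\<lambda>v. k)"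
  by (rule mpoly_funI[where X="{()}" and e="\<lambda>_ _. 0" and c="\<lambda>_. k"]) auto

lemma mpoly_fun_var:
  assumes "j < n" "1 \<le> d"
  shows "mpoly_fun n d (\<lambda>v. v j)"
proof (rule mpoly_funI[where X="{()}" and e="\<lambda>_ i. if i = j then 1 else 0" and c="\<lambda>_. 1"])
  fix v :: "nat \<Rightarrow> real"
  have "(\<Prod>i<n. v i ^ (if i = j then 1 else 0)) = (\<Prod>i<n. if i = j then v i else 1)"
    by (intro prod.cong) auto
  also have "\<dots> = v j" using assms by (simp add: prod.delta)
  finally show "v j = (\<Sum>x\<in>{()}. 1 * (\<Prod>i<n. v i ^ (if i = j then 1 else 0)))" by simp
qed (use assms in \<open>auto simp: sum.delta\<close>)

lemma mpoly_fun_add: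
  assumes "mpoly_fun n d P" "mpoly_fun n d Q"
  shows "mpoly_fun n d (\<lambda>v. P v + Q v)"
proof -
  obtain A a where A: "finite A" "\<forall>e\<in>A. (\<forall>j\<ge>n. e j = 0) \<and> (\<Sum>j<n. e j) \<le> d"
      "\<forall>v. P v = (\<Sum>e\<in>A. a e * (\<Prod>j<n. v j ^ e j))"
    using assms(1) unfolding mpoly_fun_def by blast
  obtain B b where B: "finite B" "\<forall>e\<in>B. (\<forall>j\<ge>n. e j = 0) \<and> (\<Sum>j<n. e j) \<le> d"
      "\<forall>v. Q v = (\<Sum>e\<in>B. b e * (\<Prod>j<n. v j ^ e j))"
    using assms(2) unfolding mpoly_fun_def by blast
  show ?thesis
    by (rule mpoly_funI[where X="A <+> B" and e="case_sum id id" and c="case_sum a b"])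
      (use A B in \<open>auto simp: sum.Plus comp_def\<close>)
qed

lemma mpoly_fun_mult:
  assumes "mpoly_fun n d1 P" "mpoly_fun n d2 Q"
  shows "mpoly_fun n (d1 + d2) (\<lambda>v. P v * Q v)"
proof -
  obtain A a where A: "finite A" "\<forall>e\<in>A. (\<forall>j\<ge>n. e j = 0) \<and> (\<Sum>j<n. e j) \<le> d1"
      "\<forall>v. P v = (\<Sum>e\<in>A. a e * (\<Prod>j<n. v j ^ e j))"
    using assms(1) unfolding mpoly_fun_def by blast
  obtain B b where B: "finite B" "\<forall>e\<in>B. (\<forall>j\<ge>n. e j = 0) \<and> (\<Sum>j<n. e j) \<le> d2"
      "\<forall>v. Q v = (\<Sum>e\<in>B. b e * (\<Prod>j<n. v j ^ e j))"
    using assms(2) unfolding mpoly_fun_def by blast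
  show ?thesis
  proof (rule mpoly_funI[where X="A \<times> B" and e="\<lambda>(e, e') j. e j + e' j" and c="\<lambda>(e, e'). a e * b e'"])
    show "finite (A \<times> B)" using A B by simp
  next
    fix x assume "x \<in> A \<times> B"
    then obtain e e' where "x = (e, e')" "e \<in> A" "e' \<in> B" by auto
    then show "(\<forall>j\<ge>n. (case x of (e, e') \<Rightarrow> \<lambda>j. e j + e' j) j = 0)
        \<and> (\<Sum>j<n. (case x of (e, e') \<Rightarrow> \<lambda>j. e j + e' j) j) \<le> d1 + d2"
      using A(2) B(2) by (auto simp: sum.distrib add_mono)
  next
    fix v
    have "P v * Q v = (\<Sum>e\<in>A. \<Sum>e'\<in>B. (a e * (\<Prod>j<n. v j ^ e j)) * (b e' * (\<Prod>j<n. v j ^ e' j)))"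
      using A(3) B(3) by (simp add: sum_product)
    also have "\<dots> = (\<Sum>e\<in>A. \<Sum>e'\<in>B. (a e * b e') * (\<Prod>j<n. v j ^ (e j + e' j)))"
      by (intro sum.cong refl) (simp add: power_add prod.distrib mult_ac)
    finally show "P v * Q v = (\<Sum>x\<in>A \<times> B. (case x of (e, e') \<Rightarrow> a e * b e')
        * (\<Prod>j<n. v j ^ (case x of (e, e') \<Rightarrow> \<lambda>j. e j + e' j) j))"
      by (simp add: sum.cartesian_product split_def)
  qed
qed

lemma mpoly_fun_cmult: "mpoly_fun n d P \<Longrightarrow> mpoly_fun n d (\<lambda>v. k * P v)"
  using mpoly_fun_mult[OF mpoly_fun_const[of n 0 k]] by simp

lemma mpoly_fun_sum:
  "finite K \<Longrightarrow> (\<And>k. k \<in> K \<Longrightarrow> mpoly_fun n d (F k)) \<Longrightarrow> mpoly_fun n d (\<lambda>v. \<Sum>k\<in>K. F k v)"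
  by (induction K rule: finite_induct) (auto intro: mpoly_fun_add mpoly_fun_const)

lemma mpoly_fun_prod:
  "finite K \<Longrightarrow> (\<And>k. k \<in> K \<Longrightarrow> mpoly_fun n (d k) (F k))
    \<Longrightarrow> mpoly_fun n (\<Sum>k\<in>K. d k) (\<lambda>v. \<Prod>k\<in>K. F k v)"
  by (induction K rule: finite_induct) (auto intro: mpoly_fun_mult mpoly_fun_const)

lemma mpoly_fun_power: "mpoly_fun n d P \<Longrightarrow> mpoly_fun n (q * d) (\<lambda>v. P v ^ q)"
  by (induction q) (auto intro: mpoly_fun_mult mpoly_fun_const)

lemma mpoly_fun_linear_form:
  assumes "k + r \<le> n"
  shows "mpoly_fun n 1 (\<lambda>v. \<Sum>l<r. c l * v (k + l))"
  using assms by (intro mpoly_fun_sum mpoly_fun_cmult mpoly_fun_var) auto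

lemma mpoly_fun_quadratic_form:
  assumes "k + r \<le> n"
  shows "mpoly_fun n 2 (\<lambda>v. \<Sum>a<r. \<Sum>b<r. c a b * (v (k + a) * v (k + b)))"
proof -
  have "mpoly_fun n 2 (\<lambda>v. v (k + a) * v (k + b))" if "a < r" "b < r" for a b
    using assms that mpoly_fun_mult[OF mpoly_fun_var[of "k + a" n 1] mpoly_fun_var[of "k + b" n 1]]
    by (simp add: numeral_2_eq_2)
  then show ?thesis by (intro mpoly_fun_sum mpoly_fun_cmult) auto
qed

definition lagrange_basis :: "(nat \<Rightarrow> real) \<Rightarrow> nat \<Rightarrow> nat \<Rightarrow> real poly" where
  "lagrange_basis x r l = (\<Prod>m\<in>{..<r} - {l}. smult (1 / (x l - x m)) [:- x m, 1:])"

definition lagrange_interp :: "(nat \<Rightarrow> real) \<Rightarrow> nat \<Rightarrow> (nat \<Rightarrow> real) \<Rightarrow> real poly" where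
  "lagrange_interp x r w = (\<Sum>l<r. smult (w l) (lagrange_basis x r l))"

lemma degree_lagrange_basis:
  assumes "l < r"
  shows "degree (lagrange_basis x r l) \<le> r - 1"
proof -
  have "degree (lagrange_basis x r l) \<le> (\<Sum>m\<in>{..<r} - {l}. degree (smult (1 / (x l - x m)) [:- x m, 1:]))"
    unfolding lagrange_basis_def by (rule order_trans[OF degree_prod_sum_le]) (auto simp: comp_def)
  also have "\<dots> \<le> (\<Sum>m\<in>{..<r} - {l}. 1)"
    by (intro sum_mono) (simp add: degree_smult_le)
  also have "\<dots> = r - 1"
    using \<open>l < r\<close> by (simp add: card_Diff_singleton)
  finally show ?thesis .
qed

lemma degree_lagrange_interp: "degree (lagrange_interp x r w) \<le> r - 1"
  unfolding lagrange_interp_def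
  by (intro degree_sum_le order_trans[OF degree_smult_le] degree_lagrange_basis) simp_all

lemma poly_lagrange_basis:
  assumes "inj_on x {..<r}" "j < r" "l < r"
  shows "poly (lagrange_basis x r l) (x j) = (if j = l then 1 else 0)"
proof -
  have "poly (lagrange_basis x r l) (x j) = (\<Prod>m\<in>{..<r} - {l}. (x j - x m) / (x l - x m))"
    unfolding lagrange_basis_def poly_prod by (intro prod.cong) (auto simp: diff_divide_distrib)
  also have "\<dots> = (if j = l then 1 else 0)"
  proof (cases "j = l")
    case True
    have "x l \<noteq> x m" if "m \<in> {..<r} - {l}" for m
      using assms(1,3) that by (auto dest: inj_onD)
    then show ?thesis using True by (simp add: prod.neutral)
  next
    case False
    then show ?thesis using assms by (auto intro!: prod_zero bexI[of _ j])
  qed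
  finally show ?thesis .
qed

lemma poly_lagrange_interp:
  assumes "inj_on x {..<r}" "j < r"
  shows "poly (lagrange_interp x r w) (x j) = w j"
proof -
  have "poly (lagrange_interp x r w) (x j) = (\<Sum>l<r. w l * (if j = l then 1 else 0))"
    unfolding lagrange_interp_def poly_sum using assms
    by (intro sum.cong) (auto simp: poly_lagrange_basis)
  also have "\<dots> = w j" using assms by (simp add: if_distrib sum.delta cong: if_cong)
  finally show ?thesis .
qed

lemma lagrange_interp_unique:
  assumes inj: "inj_on x {..<r}" and "r > 0"
    and "degree q \<le> r - 1" and "\<forall>l<r. poly q (x l) = w l"
  shows "q = lagrange_interp x r w"
proof (rule poly_eqI_degree[where A="x ` {..<r}"])
  show "poly q y = poly (lagrange_interp x r w) y" if "y \<in> x ` {..<r}" for y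
    using that assms poly_lagrange_interp by auto
  have "card (x ` {..<r}) = r" using inj by (simp add: card_image)
  then show "degree q < card (x ` {..<r})" "degree (lagrange_interp x r w) < card (x ` {..<r})"
    using assms degree_lagrange_interp[of x r w] by auto
qed

lemma poly_higher_pderiv_lagrange_interp:
  "poly ((pderiv ^^ s) (lagrange_interp x r w)) t
    = (\<Sum>a<r. w a * poly ((pderiv ^^ s) (lagrange_basis x r a)) t)"
  unfolding lagrange_interp_def higher_pderiv_sum higher_pderiv_smult poly_sum by simp

lemma integral_sq_higher_pderiv_lagrange_interp:
  fixes lo hi :: real
  shows "integral {lo..hi} (\<lambda>t. (poly ((pderiv ^^ s) (lagrange_interp x r w)) t)\<^sup>2)
    = (\<Sum>a<r. \<Sum>b<r. integral {lo..hi} (\<lambda>t. poly ((pderiv ^^ s) (lagrange_basis x r a)) t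
                                          * poly ((pderiv ^^ s) (lagrange_basis x r b)) t)
                    * (w a * w b))"
proof -
  let ?B = "\<lambda>a t. poly ((pderiv ^^ s) (lagrange_basis x r a)) t"
  have int: "(\<lambda>t. ?B a t * ?B b t * c) integrable_on {lo..hi}" for a b c
    by (intro integrable_continuous_interval continuous_intros)
  have "(\<lambda>t. (poly ((pderiv ^^ s) (lagrange_interp x r w)) t)\<^sup>2)
      = (\<lambda>t. \<Sum>a<r. \<Sum>b<r. ?B a t * ?B b t * (w a * w b))"
    by (simp add: poly_higher_pderiv_lagrange_interp power2_eq_square sum_product mult_ac)
  then show ?thesis
    by (simp add: integral_sum integrable_sum int)
qed

lemma normalized_weighted_sum_eq:
  fixes C E g :: "'k \<Rightarrow> real"
  assumes "finite K" "\<And>j. j \<in> K \<Longrightarrow> E j \<noteq> 0"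
  shows "(\<Sum>k\<in>K. (C k / E k) / (\<Sum>j\<in>K. C j / E j) * g k)
    = (\<Sum>k\<in>K. C k * g k * (\<Prod>j\<in>K - {k}. E j)) / (\<Sum>k\<in>K. C k * (\<Prod>j\<in>K - {k}. E j))"
proof -
  define D where "D = (\<Prod>j\<in>K. E j)"
  have "D \<noteq> 0" unfolding D_def using assms by simp
  have weight: "C k / E k = C k * (\<Prod>j\<in>K - {k}. E j) / D" if "k \<in> K" for k
    using assms that unfolding D_def by (simp add: prod.remove[of K k] field_simps)
  have num: "(\<Sum>k\<in>K. C k / E k * g k) = (\<Sum>k\<in>K. C k * g k * (\<Prod>j\<in>K - {k}. E j)) / D"
    unfolding sum_divide_distrib by (intro sum.cong refl) (simp add: weight mult_ac)
  have den: "(\<Sum>k\<in>K. C k / E k) = (\<Sum>k\<in>K. C k * (\<Prod>j\<in>K - {k}. E j)) / D"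
    unfolding sum_divide_distrib by (intro sum.cong refl) (simp add: weight)
  have "(\<Sum>k\<in>K. (C k / E k) / (\<Sum>j\<in>K. C j / E j) * g k)
      = (\<Sum>k\<in>K. C k / E k * g k) / (\<Sum>k\<in>K. C k / E k)"
    by (simp add: sum_divide_distrib)
  then show ?thesis unfolding num den using \<open>D \<noteq> 0\<close> by simp
qed

lemma mpoly_fun_normalized_weighted_sum:
  fixes G S :: "nat \<Rightarrow> (nat \<Rightarrow> real) \<Rightarrow> real" and C :: "nat \<Rightarrow> real"
  assumes "r > 0" "eps > 0" "\<And>k. k < r \<Longrightarrow> C k > 0"
    and G: "\<And>k. k < r \<Longrightarrow> mpoly_fun n dG (G k)"
    and S: "\<And>k. k < r \<Longrightarrow> mpoly_fun n dS (S k)" "\<And>k v. k < r \<Longrightarrow> S k v \<ge> 0"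
  shows "\<exists>P1 P2. mpoly_fun n (dG + p * dS * (r - 1)) P1 \<and> mpoly_fun n (p * dS * (r - 1)) P2
    \<and> (\<forall>v. P2 v > 0)
    \<and> (\<forall>v. (\<Sum>k<r. (C k / (eps + S k v) ^ p) / (\<Sum>j<r. C j / (eps + S j v) ^ p) * G k v)
           = P1 v / P2 v)"
proof (intro exI conjI allI)
  let ?E = "\<lambda>j v. (eps + S j v) ^ p"
  have E_pos: "?E j v > 0" if "j < r" for j v
    using S(2)[OF that, of v] \<open>eps > 0\<close> by simp
  have E_nonzero: "?E j v \<noteq> 0" if "j < r" for j v
    using E_pos[OF that, of v] by linarith
  have others: "mpoly_fun n (p * dS * (r - 1)) (\<lambda>v. \<Prod>j\<in>{..<r} - {k}. ?E j v)" if "k < r" for k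
  proof -
    have "mpoly_fun n (\<Sum>j\<in>{..<r} - {k}. p * dS) (\<lambda>v. \<Prod>j\<in>{..<r} - {k}. ?E j v)"
      using S(1) by (intro mpoly_fun_prod mpoly_fun_power mpoly_fun_add mpoly_fun_const) auto
    then show ?thesis using that by (simp add: card_Diff_singleton mult.commute)
  qed
  have "mpoly_fun n (dG + p * dS * (r - 1)) (\<lambda>v. C k * (G k v * (\<Prod>j\<in>{..<r} - {k}. ?E j v)))"
    if "k < r" for k
    using that by (intro mpoly_fun_cmult mpoly_fun_mult G others)
  then show "mpoly_fun n (dG + p * dS * (r - 1)) (\<lambda>v. \<Sum>k<r. C k * G k v * (\<Prod>j\<in>{..<r} - {k}. ?E j v))"
    by (intro mpoly_fun_sum) (simp_all add: mult.assoc)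
  show "mpoly_fun n (p * dS * (r - 1)) (\<lambda>v. \<Sum>k<r. C k * (\<Prod>j\<in>{..<r} - {k}. ?E j v))"
    by (intro mpoly_fun_sum mpoly_fun_cmult others) simp_all
  show "(\<Sum>k<r. C k * (\<Prod>j\<in>{..<r} - {k}. ?E j v)) > 0" for v
    using assms E_pos by (intro sum_pos mult_pos_pos prod_pos) auto
  show "(\<Sum>k<r. (C k / ?E k v) / (\<Sum>j<r. C j / ?E j v) * G k v)
      = (\<Sum>k<r. C k * G k v * (\<Prod>j\<in>{..<r} - {k}. ?E j v))
        / (\<Sum>k<r. C k * (\<Prod>j\<in>{..<r} - {k}. ?E j v))" for v
    using E_nonzero by (intro normalized_weighted_sum_eq) auto
qed

definition weno_nodes :: "nat \<Rightarrow> real \<Rightarrow> real \<Rightarrow> int \<Rightarrow> nat \<Rightarrow> nat \<Rightarrow> real" where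
  "weno_nodes r x0 dx i k l = grid x0 dx (i + int k - int r + 1 + int l)"

text \<open>The argument \<open>v\<close> is the vector of all stencil values, \<open>v j = f\<^sub>i\<^sub>-\<^sub>r\<^sub>+\<^sub>1\<^sub>+\<^sub>j\<close>, so that
  the stencil \<open>S\<^sup>k\<close> reads off \<open>v k, \<dots>, v (k + r - 1)\<close>.\<close>

definition weno_stencil_poly :: "nat \<Rightarrow> real \<Rightarrow> real \<Rightarrow> int \<Rightarrow> nat \<Rightarrow> (nat \<Rightarrow> real) \<Rightarrow> real poly" where
  "weno_stencil_poly r x0 dx i k v = lagrange_interp (weno_nodes r x0 dx i k) r (\<lambda>l. v (k + l))"

definition weno_g_form :: "nat \<Rightarrow> real \<Rightarrow> real \<Rightarrow> int \<Rightarrow> nat \<Rightarrow> (nat \<Rightarrow> real) \<Rightarrow> real" where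
  "weno_g_form r x0 dx i k v = poly (weno_stencil_poly r x0 dx i k v) (grid x0 dx i + dx / 2)"

definition weno_IS_form :: "nat \<Rightarrow> real \<Rightarrow> real \<Rightarrow> int \<Rightarrow> nat \<Rightarrow> (nat \<Rightarrow> real) \<Rightarrow> real" where
  "weno_IS_form r x0 dx i k v =
     (\<Sum>l\<in>{1..r - 1}. dx ^ (2 * l - 1) *
        integral {grid x0 dx i - dx / 2 .. grid x0 dx i + dx / 2}
          (\<lambda>t. (poly ((pderiv ^^ l) (weno_stencil_poly r x0 dx i k v)) t)\<^sup>2))"

lemma weno_pk_eq_stencil_poly:
  assumes "dx > 0" "r > 0"
  shows "weno_pk r x0 dx f i k = weno_stencil_poly r x0 dx i k (\<lambda>j. f (grid x0 dx (i - int r + 1 + int j)))"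
proof -
  let ?x = "weno_nodes r x0 dx i k"
  let ?w = "\<lambda>l. f (grid x0 dx (i - int r + 1 + int (k + l)))"
  have inj: "inj_on ?x {..<r}" using \<open>dx > 0\<close> by (auto simp: inj_on_def weno_nodes_def grid_def)
  have w: "?w l = f (?x l)" for l by (simp add: weno_nodes_def algebra_simps)
  have "weno_pk r x0 dx f i k = lagrange_interp ?x r ?w"
    unfolding weno_pk_def weno_nodes_def[symmetric]
  proof (rule the_equality)
    show "degree (lagrange_interp ?x r ?w) \<le> r - 1
        \<and> (\<forall>l<r. poly (lagrange_interp ?x r ?w) (?x l) = f (?x l))"
      using degree_lagrange_interp poly_lagrange_interp[OF inj] w by auto
    show "q = lagrange_interp ?x r ?w" if "degree q \<le> r - 1 \<and> (\<forall>l<r. poly q (?x l) = f (?x l))" for q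
      using that lagrange_interp_unique[OF inj \<open>r > 0\<close>, of q ?w] w by auto
  qed
  then show ?thesis unfolding weno_stencil_poly_def by simp
qed

lemma weno_g_eq_form:
  "dx > 0 \<Longrightarrow> r > 0 \<Longrightarrow>
    weno_g r x0 dx f i k = weno_g_form r x0 dx i k (\<lambda>j. f (grid x0 dx (i - int r + 1 + int j)))"
  unfolding weno_g_def weno_g_form_def by (simp add: weno_pk_eq_stencil_poly)

lemma weno_IS_eq_form:
  "dx > 0 \<Longrightarrow> r > 0 \<Longrightarrow>
    weno_IS r x0 dx f i k = weno_IS_form r x0 dx i k (\<lambda>j. f (grid x0 dx (i - int r + 1 + int j)))"
  unfolding weno_IS_def weno_IS_form_def by (simp add: weno_pk_eq_stencil_poly)

lemma weno_IS_form_nonneg: "dx > 0 \<Longrightarrow> weno_IS_form r x0 dx i k v \<ge> 0"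
  unfolding weno_IS_form_def
  by (intro sum_nonneg mult_nonneg_nonneg integral_nonneg integrable_continuous_interval
      continuous_intros) auto

lemma mpoly_fun_weno_g_form:
  assumes "k < r"
  shows "mpoly_fun (2 * r - 1) 1 (weno_g_form r x0 dx i k)"
proof -
  have "weno_g_form r x0 dx i k = (\<lambda>v. \<Sum>l<r.
      poly (lagrange_basis (weno_nodes r x0 dx i k) r l) (grid x0 dx i + dx / 2) * v (k + l))"
    unfolding weno_g_form_def weno_stencil_poly_def lagrange_interp_def poly_sum
    by (simp add: mult.commute)
  then show ?thesis using assms by (simp only:) (rule mpoly_fun_linear_form, simp)
qed

lemma mpoly_fun_weno_IS_form:
  assumes "k < r"
  shows "mpoly_fun (2 * r - 1) 2 (weno_IS_form r x0 dx i k)"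
  unfolding weno_IS_form_def weno_stencil_poly_def integral_sq_higher_pderiv_lagrange_interp
  using assms by (intro mpoly_fun_sum mpoly_fun_cmult mpoly_fun_quadratic_form) auto

theorem corollary5:
  fixes m r p :: nat and eps x0 dx :: real and C :: "nat \<Rightarrow> real" and i :: int
  assumes "m \<ge> 1" and "r = 2 * m + 1" and "eps > 0" and "p > 0"
    and "\<forall>k<r. C k > 0" and "dx > 0"
  shows "\<exists>P1 P2. mpoly_fun (2 * r - 1) (2 * p * r - 1) P1
           \<and> mpoly_fun (2 * r - 1) (2 * p * (r - 1)) P2
           \<and> (\<forall>v. P2 v > 0)
           \<and> (\<forall>f :: real \<Rightarrow> real.
                 weno_rec r eps p C x0 dx f i
                 = P1 (\<lambda>j. f (grid x0 dx (i - int r + 1 + int j)))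
                   / P2 (\<lambda>j. f (grid x0 dx (i - int r + 1 + int j))))"
proof -
  have "r > 0" using assms(2) by simp
  let ?g = "weno_g_form r x0 dx i" and ?IS = "weno_IS_form r x0 dx i"
  have C_pos: "\<And>k. k < r \<Longrightarrow> C k > 0" using assms(5) by blast
  obtain P1 P2 where P1: "mpoly_fun (2 * r - 1) (1 + p * 2 * (r - 1)) P1"
    and P2: "mpoly_fun (2 * r - 1) (p * 2 * (r - 1)) P2" "\<forall>v. P2 v > 0"
    and weights: "\<forall>v. (\<Sum>k<r. (C k / (eps + ?IS k v) ^ p) / (\<Sum>j<r. C j / (eps + ?IS j v) ^ p)
                         * ?g k v) = P1 v / P2 v"
    using mpoly_fun_normalized_weighted_sum[where C = C and p = p and G = ?g and S = ?IS and dG = 1 and dS = 2, OF \<open>r > 0\<close> \<open>eps > 0\<close> C_pos mpoly_fun_weno_g_form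
        mpoly_fun_weno_IS_form weno_IS_form_nonneg[OF \<open>dx > 0\<close>]]
    by blast
  have "1 + p * 2 * (r - 1) \<le> 2 * p * r - 1"
    using \<open>p > 0\<close> \<open>r > 0\<close> by (cases r) (auto simp: algebra_simps)
  with P1 have "mpoly_fun (2 * r - 1) (2 * p * r - 1) P1" by (rule mpoly_fun_mono)
  moreover have "weno_rec r eps p C x0 dx f i = P1 (\<lambda>j. f (grid x0 dx (i - int r + 1 + int j)))
      / P2 (\<lambda>j. f (grid x0 dx (i - int r + 1 + int j)))" for f
    unfolding weno_rec_def weno_omega_def weno_alpha_def
      weno_g_eq_form[OF \<open>dx > 0\<close> \<open>r > 0\<close>] weno_IS_eq_form[OF \<open>dx > 0\<close> \<open>r > 0\<close>]
    by (rule weights[rule_format])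
  ultimately show ?thesis using P2 by (auto simp: mult_ac)
qed

end
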